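(* For $k=1,\dots,K$, let $\mathcal{P}^k$ be a family of probability densities on $\mathbb{R}^n$, and let $X^k_1,X^k_2\subset\mathbb{R}^n$ be nonempty closed convex non-intersecting sets, one of them bounded. Let $(x^{1}_{k*},x^{2}_{k*})$ minimize $\|x^1-x^2\|_2$ over $x^1\in X^k_1,x^2\in X^k_2$, and set $h_k=(x^1_{k*}-x^2_{k*})/\|x^1_{k*}-x^2_{k*}\|_2$, $c_k=\tfrac12h_k^T(x^1_{k*}+x^2_{k*})$, $\delta_k=\tfrac12\|x^1_{k*}-x^2_{k*}\|_2$. Given potentials $\eta_1,\dots,\eta_K$, let $\phi^{(K)}(\omega_1,\dots,\omega_K)=\sum_{k=1}^K\eta_k(h_k^T\omega_k-c_k)$. Consider observations $\omega_k=x_k+\xi_k$, $k\le K$, where $(x_k)$ is a deterministic sequence, $\xi_k\sim p_k$ are independent and $(p_k\in\mathcal{P}^k)$ is a deterministic sequence, and the hypotheses $H_\chi:\ x_k\in X^k_\chi$ for all $k\le K$, $\chi=1,2$. Let $\mathcal{T}^\eta_K$ accept $H_1$ when $\phi^{(K)}(\omega_1,\dots,\omega_K)\ge0$ and accept $H_2$ otherwise. Then the risk of $\mathcal{T}^\eta_K$ does not exceed $\prod_{k=1}^K\mathrm{risk}_{\delta_k}(\eta_k|\mathcal{P}^k)$.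
   Context: A potential is an odd, nondecreasing Borel function $\eta:\mathbb{R}\to\mathbb{R}$. For a family $\mathcal{P}$ of probability densities on $\mathbb{R}^n$, $\delta\ge0$ and a potential $\eta$, $\mathrm{risk}_\delta(\eta|\mathcal{P})$ is the smallest $\epsilon$ such that for all unit $e\in\mathbb{R}^n$ and all $p\in\mathcal{P}$: $\int e^{-\eta(\delta+e^T\xi)}p(\xi)d\xi\le\epsilon$ and $\int e^{\eta(e^T\xi-\delta)}p(\xi)d\xi\le\epsilon$. The risk of a test is $\max_{\chi=1,2}$ of the supremum, over all deterministic sequences $x_k\in X^k_\chi$ and $p_k\in\mathcal{P}^k$, $k\le K$, of the probability that the test rejects $H_\chi$. *)

theory Defs
  imports "HOL-Probability.Probability"
begin

definition is_potential :: "(real \<Rightarrow> real) \<Rightarrow> bool" where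
  "is_potential \<eta> \<longleftrightarrow> (\<forall>t. \<eta> (- t) = - \<eta> t) \<and> mono \<eta> \<and> \<eta> \<in> borel_measurable borel"

definition is_prob_density :: "('a::euclidean_space \<Rightarrow> real) \<Rightarrow> bool" where
  "is_prob_density p \<longleftrightarrow> p \<in> borel_measurable borel \<and> (\<forall>x. 0 \<le> p x)
      \<and> (\<integral>\<^sup>+ x. ennreal (p x) \<partial>lborel) = 1"

text \<open>risk_delta(eta | P): the smallest epsilon bounding both integrals for all unit e
  and all p in P, i.e. the supremum of these integrals (in [0, infinity]).\<close>
definition risk_pot :: "real \<Rightarrow> (real \<Rightarrow> real) \<Rightarrow> ('a::euclidean_space \<Rightarrow> real) set \<Rightarrow> ennreal" where
  "risk_pot \<delta> \<eta> P = (SUP ep \<in> {e. norm e = 1} \<times> P.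
      max (\<integral>\<^sup>+ \<xi>. ennreal (exp (- \<eta> (\<delta> + fst ep \<bullet> \<xi>)) * snd ep \<xi>) \<partial>lborel)
          (\<integral>\<^sup>+ \<xi>. ennreal (exp (\<eta> (fst ep \<bullet> \<xi> - \<delta>)) * snd ep \<xi>) \<partial>lborel))"

definition noise_measure :: "nat \<Rightarrow> (nat \<Rightarrow> 'a::euclidean_space \<Rightarrow> real) \<Rightarrow> (nat \<Rightarrow> 'a) measure" where
  "noise_measure K p = (\<Pi>\<^sub>M k\<in>{1..K}. density lborel (\<lambda>\<xi>. ennreal (p k \<xi>)))"

definition test_risk :: "nat \<Rightarrow> (nat \<Rightarrow> 'a::euclidean_space set) \<Rightarrow> (nat \<Rightarrow> 'a set)
    \<Rightarrow> (nat \<Rightarrow> ('a \<Rightarrow> real) set) \<Rightarrow> ((nat \<Rightarrow> 'a) \<Rightarrow> real) \<Rightarrow> ennreal" where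
  "test_risk K X1 X2 P \<phi> = max
     (SUP xp \<in> {(x, p). \<forall>k\<in>{1..K}. x k \<in> X1 k \<and> p k \<in> P k}.
        emeasure (noise_measure K (snd xp))
          {\<xi> \<in> space (noise_measure K (snd xp)). \<phi> (\<lambda>k. fst xp k + \<xi> k) < 0})
     (SUP xp \<in> {(x, p). \<forall>k\<in>{1..K}. x k \<in> X2 k \<and> p k \<in> P k}.
        emeasure (noise_measure K (snd xp))
          {\<xi> \<in> space (noise_measure K (snd xp)). \<phi> (\<lambda>k. fst xp k + \<xi> k) \<ge> 0})"

end

theory Submission imports Defs begin

text \<open>The hyperplane through the midpoint of a closest pair, orthogonal to the segment joining it,
  leaves the two convex sets in the half-spaces at distance at least \<open>\<delta>\<^sub>k\<close> on either side.
  Hence on \<open>H\<^sub>1\<close> each argument \<open>h\<^sub>k\<^sup>T\<omega>\<^sub>k - c\<^sub>k\<close> is at least \<open>\<delta>\<^sub>k + h\<^sub>k\<^sup>T\<xi>\<^sub>k\<close>, and on \<open>H\<^sub>2\<close> at most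
  \<open>h\<^sub>k\<^sup>T\<xi>\<^sub>k - \<delta>\<^sub>k\<close>; since the potentials are nondecreasing, Markov's inequality applied to
  \<open>exp (\<mp>\<phi>)\<close> together with independence bounds each error probability by a product of integrals,
  each of which appears in the supremum defining \<open>risk\<^sub>\<delta>\<^sub>k(\<eta>\<^sub>k|\<P>\<^sup>k)\<close>.\<close>

lemma closest_pair_separating_slab:
  fixes A B :: "'a::euclidean_space set"
  assumes A: "convex A" "closed A" and B: "convex B" "closed B"
    and a0: "a0 \<in> A" and b0: "b0 \<in> B" and disjoint: "A \<inter> B = {}"
    and closest: "\<And>a b. a \<in> A \<Longrightarrow> b \<in> B \<Longrightarrow> norm (a0 - b0) \<le> norm (a - b)"
    and h_def: "h = (1 / norm (a0 - b0)) *\<^sub>R (a0 - b0)"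
    and c_def: "c = (1 / 2) * (h \<bullet> (a0 + b0))"
    and \<delta>_def: "\<delta> = (1 / 2) * norm (a0 - b0)"
  shows "norm h = 1"
    and "\<And>a. a \<in> A \<Longrightarrow> \<delta> \<le> h \<bullet> a - c"
    and "\<And>b. b \<in> B \<Longrightarrow> h \<bullet> b - c \<le> - \<delta>"
proof -
  define v where "v = a0 - b0"
  define n where "n = norm v"
  have "a0 \<noteq> b0" using a0 b0 disjoint by (metis IntI empty_iff)
  then have n: "n > 0" unfolding n_def v_def by simp
  have vv: "v \<bullet> v = n\<^sup>2" unfolding n_def by (simp add: power2_norm_eq_inner)
  have shift: "h \<bullet> y - c = (1 / n) * (v \<bullet> (y - a0)) + \<delta>"
    and shift': "h \<bullet> y - c = (1 / n) * (v \<bullet> (y - b0)) - \<delta>" for y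
    using n vv unfolding h_def c_def \<delta>_def n_def[symmetric] v_def[symmetric]
    by (simp_all add: v_def inner_diff_right inner_add_right inner_diff_left inner_commute
        field_simps power2_eq_square; algebra)+
  show "norm h = 1" using n unfolding h_def n_def v_def by simp
  show "\<delta> \<le> h \<bullet> a - c" if a: "a \<in> A" for a
  proof -
    have "(b0 - a0) \<bullet> (a - a0) \<le> 0"
      by (rule any_closest_point_dot[OF A a0 a])
        (use closest[OF _ b0] in \<open>simp add: dist_norm norm_minus_commute\<close>)
    then have "0 \<le> v \<bullet> (a - a0)" unfolding v_def
      by (metis inner_minus_left minus_diff_eq neg_le_0_iff_le)
    then show ?thesis using n by (simp add: shift)
  qed
  show "h \<bullet> b - c \<le> - \<delta>" if b: "b \<in> B" for b
  proof -
    have "(a0 - b0) \<bullet> (b - b0) \<le> 0"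
      by (rule any_closest_point_dot[OF B b0 b]) (use closest[OF a0] in \<open>simp add: dist_norm\<close>)
    then show ?thesis using n by (simp add: shift' v_def divide_nonpos_pos)
  qed
qed

lemma emeasure_le_nn_integral_exp:
  fixes F :: "'a \<Rightarrow> real"
  assumes "\<And>x. Q x \<Longrightarrow> 0 \<le> F x"
  shows "emeasure M {x \<in> space M. Q x} \<le> (\<integral>\<^sup>+x. ennreal (exp (F x)) \<partial>M)"
proof (cases "{x \<in> space M. Q x} \<in> sets M")
  case True
  have "emeasure M {x \<in> space M. Q x} = (\<integral>\<^sup>+x. indicator {x \<in> space M. Q x} x \<partial>M)"
    using True by simp
  also have "\<dots> \<le> (\<integral>\<^sup>+x. ennreal (exp (F x)) \<partial>M)"
    using assms by (intro nn_integral_mono) (auto simp: indicator_def)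
  finally show ?thesis .
qed (simp add: emeasure_notin_sets)

lemma finite_measure_density_prob_density:
  assumes "is_prob_density p"
  shows "finite_measure (density lborel (\<lambda>x. ennreal (p x)))"
  using assms unfolding is_prob_density_def
  by (intro finite_measureI) (simp add: emeasure_density)

lemma nn_integral_noise_measure_exp_sum:
  fixes p :: "nat \<Rightarrow> 'a::euclidean_space \<Rightarrow> real"
  assumes dens: "\<And>k. k \<in> {1..K} \<Longrightarrow> is_prob_density (p k)"
    and f: "\<And>k. k \<in> {1..K} \<Longrightarrow> f k \<in> borel_measurable borel"
  shows "(\<integral>\<^sup>+\<xi>. ennreal (exp (\<Sum>k\<in>{1..K}. f k (\<xi> k))) \<partial>noise_measure K p)
     = (\<Prod>k\<in>{1..K}. \<integral>\<^sup>+t. ennreal (exp (f k t) * p k t) \<partial>lborel)"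
proof -
  \<comment> \<open>The factors outside \<open>{1..K}\<close> do not matter; \<open>lborel\<close> keeps the family sigma-finite.\<close>
  define M where "M k = (if k \<in> {1..K} then density lborel (\<lambda>\<xi>. ennreal (p k \<xi>)) else lborel)" for k
  have NM: "noise_measure K p = PiM {1..K} M"
    unfolding noise_measure_def M_def by (intro PiM_cong) auto
  interpret product_sigma_finite M
    unfolding product_sigma_finite_def M_def
    using finite_measure.sigma_finite_measure[OF finite_measure_density_prob_density[OF dens]]
      lborel.sigma_finite_measure_axioms by auto
  have exp_f: "(\<lambda>t. exp (f k t)) \<in> borel_measurable borel" if "k \<in> {1..K}" for k
    using f[OF that] by measurable
  have "(\<integral>\<^sup>+\<xi>. ennreal (exp (\<Sum>k\<in>{1..K}. f k (\<xi> k))) \<partial>noise_measure K p)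
      = (\<integral>\<^sup>+\<xi>. (\<Prod>k\<in>{1..K}. ennreal (exp (f k (\<xi> k)))) \<partial>PiM {1..K} M)"
    unfolding NM by (simp add: exp_sum prod_ennreal)
  also have "\<dots> = (\<Prod>k\<in>{1..K}. \<integral>\<^sup>+t. ennreal (exp (f k t)) \<partial>M k)"
    using exp_f by (intro product_nn_integral_prod) (auto simp: M_def)
  also have "\<dots> = (\<Prod>k\<in>{1..K}. \<integral>\<^sup>+t. ennreal (exp (f k t) * p k t) \<partial>lborel)"
  proof (intro prod.cong refl)
    fix k assume k: "k \<in> {1..K}"
    then have "p k \<in> borel_measurable borel" "\<And>x. 0 \<le> p k x"
      using dens unfolding is_prob_density_def by auto
    with k show "(\<integral>\<^sup>+t. ennreal (exp (f k t)) \<partial>M k) = (\<integral>\<^sup>+t. ennreal (exp (f k t) * p k t) \<partial>lborel)"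
      by (simp add: M_def nn_integral_density exp_f ennreal_mult' mult.commute)
  qed
  finally show ?thesis .
qed

lemma emeasure_noise_measure_le_prod:
  fixes p :: "nat \<Rightarrow> 'a::euclidean_space \<Rightarrow> real"
  assumes "\<And>k. k \<in> {1..K} \<Longrightarrow> is_prob_density (p k)"
    and "\<And>k. k \<in> {1..K} \<Longrightarrow> f k \<in> borel_measurable borel"
    and "\<And>\<xi>. Q \<xi> \<Longrightarrow> 0 \<le> (\<Sum>k\<in>{1..K}. f k (\<xi> k))"
  shows "emeasure (noise_measure K p) {\<xi> \<in> space (noise_measure K p). Q \<xi>}
     \<le> (\<Prod>k\<in>{1..K}. \<integral>\<^sup>+t. ennreal (exp (f k t) * p k t) \<partial>lborel)"
proof -
  have "emeasure (noise_measure K p) {\<xi> \<in> space (noise_measure K p). Q \<xi>}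
      \<le> (\<integral>\<^sup>+\<xi>. ennreal (exp (\<Sum>k\<in>{1..K}. f k (\<xi> k))) \<partial>noise_measure K p)"
    by (rule emeasure_le_nn_integral_exp) (rule assms(3))
  also have "\<dots> = (\<Prod>k\<in>{1..K}. \<integral>\<^sup>+t. ennreal (exp (f k t) * p k t) \<partial>lborel)"
    by (rule nn_integral_noise_measure_exp_sum[OF assms(1,2)])
  finally show ?thesis .
qed

lemma nn_integral_exp_neg_potential_le_risk_pot:
  assumes "mono \<eta>" "norm e = 1" "p \<in> P" "\<And>t. 0 \<le> p t" "\<delta> \<le> e \<bullet> x - c"
  shows "(\<integral>\<^sup>+t. ennreal (exp (- \<eta> (e \<bullet> (x + t) - c)) * p t) \<partial>lborel) \<le> risk_pot \<delta> \<eta> P"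
proof -
  have "\<eta> (\<delta> + e \<bullet> t) \<le> \<eta> (e \<bullet> (x + t) - c)" for t
    using assms(5) by (intro monoD[OF assms(1)]) (simp add: inner_add_right)
  then have "(\<integral>\<^sup>+t. ennreal (exp (- \<eta> (e \<bullet> (x + t) - c)) * p t) \<partial>lborel)
      \<le> (\<integral>\<^sup>+t. ennreal (exp (- \<eta> (\<delta> + e \<bullet> t)) * p t) \<partial>lborel)"
    by (intro nn_integral_mono ennreal_leI mult_right_mono assms(4)) simp
  also have "\<dots> \<le> risk_pot \<delta> \<eta> P"
    unfolding risk_pot_def by (rule SUP_upper2[where i="(e, p)"]) (use assms(2,3) in auto)
  finally show ?thesis .
qed

lemma nn_integral_exp_potential_le_risk_pot:
  assumes "mono \<eta>" "norm e = 1" "p \<in> P" "\<And>t. 0 \<le> p t" "e \<bullet> x - c \<le> - \<delta>"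
  shows "(\<integral>\<^sup>+t. ennreal (exp (\<eta> (e \<bullet> (x + t) - c)) * p t) \<partial>lborel) \<le> risk_pot \<delta> \<eta> P"
proof -
  have "\<eta> (e \<bullet> (x + t) - c) \<le> \<eta> (e \<bullet> t - \<delta>)" for t
    using assms(5) by (intro monoD[OF assms(1)]) (simp add: inner_add_right)
  then have "(\<integral>\<^sup>+t. ennreal (exp (\<eta> (e \<bullet> (x + t) - c)) * p t) \<partial>lborel)
      \<le> (\<integral>\<^sup>+t. ennreal (exp (\<eta> (e \<bullet> t - \<delta>)) * p t) \<partial>lborel)"
    by (intro nn_integral_mono ennreal_leI mult_right_mono assms(4)) simp
  also have "\<dots> \<le> risk_pot \<delta> \<eta> P"
    unfolding risk_pot_def by (rule SUP_upper2[where i="(e, p)"]) (use assms(2,3) in auto)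
  finally show ?thesis .
qed

theorem corollary2p11:
  fixes K :: nat
    and P :: "nat \<Rightarrow> ('a::euclidean_space \<Rightarrow> real) set"
    and X1 X2 :: "nat \<Rightarrow> 'a set"
    and x1s x2s h :: "nat \<Rightarrow> 'a"
    and c \<delta> :: "nat \<Rightarrow> real"
    and \<eta> :: "nat \<Rightarrow> real \<Rightarrow> real"
  assumes dens: "\<And>k p. k \<in> {1..K} \<Longrightarrow> p \<in> P k \<Longrightarrow> is_prob_density p"
    and ne1: "\<And>k. k \<in> {1..K} \<Longrightarrow> X1 k \<noteq> {}" and ne2: "\<And>k. k \<in> {1..K} \<Longrightarrow> X2 k \<noteq> {}"
    and cl1: "\<And>k. k \<in> {1..K} \<Longrightarrow> closed (X1 k)" and cl2: "\<And>k. k \<in> {1..K} \<Longrightarrow> closed (X2 k)"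
    and cv1: "\<And>k. k \<in> {1..K} \<Longrightarrow> convex (X1 k)" and cv2: "\<And>k. k \<in> {1..K} \<Longrightarrow> convex (X2 k)"
    and disj: "\<And>k. k \<in> {1..K} \<Longrightarrow> X1 k \<inter> X2 k = {}"
    and bdd: "\<And>k. k \<in> {1..K} \<Longrightarrow> bounded (X1 k) \<or> bounded (X2 k)"
    and x1s: "\<And>k. k \<in> {1..K} \<Longrightarrow> x1s k \<in> X1 k" and x2s: "\<And>k. k \<in> {1..K} \<Longrightarrow> x2s k \<in> X2 k"
    and minim: "\<And>k a b. k \<in> {1..K} \<Longrightarrow> a \<in> X1 k \<Longrightarrow> b \<in> X2 k \<Longrightarrow> norm (x1s k - x2s k) \<le> norm (a - b)"
    and h_def: "\<And>k. h k = (1 / norm (x1s k - x2s k)) *\<^sub>R (x1s k - x2s k)"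
    and c_def: "\<And>k. c k = (1 / 2) * (h k \<bullet> (x1s k + x2s k))"
    and \<delta>_def: "\<And>k. \<delta> k = (1 / 2) * norm (x1s k - x2s k)"
    and pot: "\<And>k. k \<in> {1..K} \<Longrightarrow> is_potential (\<eta> k)"
  shows "test_risk K X1 X2 P (\<lambda>\<omega>. \<Sum>k\<in>{1..K}. \<eta> k (h k \<bullet> \<omega> k - c k))
           \<le> (\<Prod>k\<in>{1..K}. risk_pot (\<delta> k) (\<eta> k) (P k))"
proof -
  have slab: "norm (h k) = 1" "\<And>a. a \<in> X1 k \<Longrightarrow> \<delta> k \<le> h k \<bullet> a - c k"
      "\<And>b. b \<in> X2 k \<Longrightarrow> h k \<bullet> b - c k \<le> - \<delta> k" if k: "k \<in> {1..K}" for k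
    using closest_pair_separating_slab[OF cv1[OF k] cl1[OF k] cv2[OF k] cl2[OF k]
        x1s[OF k] x2s[OF k] disj[OF k] minim[OF k] h_def c_def \<delta>_def] by auto
  have \<eta>: "mono (\<eta> k)" "\<eta> k \<in> borel_measurable borel" if "k \<in> {1..K}" for k
    using pot[OF that] unfolding is_potential_def by auto
  have nonneg: "0 \<le> p t" if "k \<in> {1..K}" "p \<in> P k" for k p t
    using dens[OF that] unfolding is_prob_density_def by auto
  show ?thesis
    unfolding test_risk_def
  proof (intro max.boundedI SUP_least, safe, goal_cases)
    case (1 x p)
    let ?N = "noise_measure K p"
    have "emeasure ?N {\<xi> \<in> space ?N. (\<Sum>k\<in>{1..K}. \<eta> k (h k \<bullet> (x k + \<xi> k) - c k)) < 0}
      \<le> (\<Prod>k\<in>{1..K}. \<integral>\<^sup>+t. ennreal (exp (- \<eta> k (h k \<bullet> (x k + t) - c k)) * p k t) \<partial>lborel)"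
      using 1 \<eta> by (intro emeasure_noise_measure_le_prod dens) (auto simp: sum_negf)
    also have "\<dots> \<le> (\<Prod>k\<in>{1..K}. risk_pot (\<delta> k) (\<eta> k) (P k))"
      using 1 \<eta> slab nonneg by (intro prod_mono_ennreal nn_integral_exp_neg_potential_le_risk_pot) auto
    finally show ?case by simp
  next
    case (2 x p)
    let ?N = "noise_measure K p"
    have "emeasure ?N {\<xi> \<in> space ?N. 0 \<le> (\<Sum>k\<in>{1..K}. \<eta> k (h k \<bullet> (x k + \<xi> k) - c k))}
      \<le> (\<Prod>k\<in>{1..K}. \<integral>\<^sup>+t. ennreal (exp (\<eta> k (h k \<bullet> (x k + t) - c k)) * p k t) \<partial>lborel)"
      using 2 \<eta> by (intro emeasure_noise_measure_le_prod dens) auto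
    also have "\<dots> \<le> (\<Prod>k\<in>{1..K}. risk_pot (\<delta> k) (\<eta> k) (P k))"
      using 2 \<eta> slab nonneg by (intro prod_mono_ennreal nn_integral_exp_potential_le_risk_pot) auto
    finally show ?case by simp
  qed
qed

end
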